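(* Let $W$ and $V$ be two B-DMCs such that $\lvert\Delta_{V}\rvert \prec_{icx} \lvert\Delta_{W}\rvert$. Then for any $\epsilon\in(0,1)$ and any function $\phi:[0,1]\to\mathbb{R}$ that is convex and increasing on $[0,1]$ with $\phi(0)=0$ and $\phi(1)=1$, we have $\mathcal{A}_{N}^{\phi,\epsilon}(V)\subset\mathcal{A}_{N}^{\phi,\epsilon}(W)$ for all $N=2^n$, $n\ge 1$.
   Context: For a binary-input discrete memoryless channel (B-DMC) $W:\{0,1\}\to\mathcal{Y}$, let $q_W(y)=\tfrac12(W(y|0)+W(y|1))$ and, for $q_W(y)>0$, $\Delta_W(y)=\frac{W(y|0)-W(y|1)}{W(y|0)+W(y|1)}$; $\Delta_W$ denotes the random variable $\Delta_W(Y)$ with $Y\sim q_W$. The polarization transforms are $W^-(y_1y_2|u_1)=\sum_{u_2\in\{0,1\}}\tfrac12 W(y_1|u_1\oplus u_2)W(y_2|u_2)$ (a channel $\{0,1\}\to\mathcal{Y}^2$) and $W^+(y_1y_2u_1|u_2)=\tfrac12 W(y_1|u_1\oplus u_2)W(y_2|u_2)$ (a channel $\{0,1\}\to\mathcal{Y}^2\times\{0,1\}$). For $s=(s_1,\dots,s_n)\in\{+,-\}^n$, $W^s$ is defined recursively by $W^{s_1\cdots s_n}=(W^{s_1\cdots s_{n-1}})^{s_n}$. For $\phi$ convex increasing on $[0,1]$ with $\phi(0)=0,\phi(1)=1$ and $\epsilon\in(0,1)$, the information set is $\mathcal{A}_{N}^{\phi,\epsilon}(W)=\{s\in\{+,-\}^n:\mathbb{E}[\phi(\lvert\Delta_{W^s}\rvert)]\ge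 1-\epsilon\}$, $N=2^n$. For real random variables, $X\prec_{icx}Y$ means $\mathbb{E}[\psi(X)]\le\mathbb{E}[\psi(Y)]$ for every increasing convex $\psi$ for which the expectations exist. *)

theory Defs
  imports "HOL-Probability.Probability"
begin

text \<open>Bits: 0 = False, 1 = True; XOR is (\<noteq>).
 A B-DMC with output alphabet 'y is a map bool \<Rightarrow> 'y pmf (W u = law of the output given input u).\<close>

type_synonym 'y bdmc = "bool \<Rightarrow> 'y pmf"

definition is_bdmc :: "'y bdmc \<Rightarrow> bool" where
  "is_bdmc W \<longleftrightarrow> finite (set_pmf (W False)) \<and> finite (set_pmf (W True))"

text \<open>Output alphabet of polarized channels: Base y (original outputs),
 MinusOut y1 y2 (outputs of W^-), PlusOut y1 y2 u1 (outputs of W^+).\<close>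
datatype 'y pout = Base 'y | MinusOut "'y pout" "'y pout" | PlusOut "'y pout" "'y pout" bool

datatype polsign = SPlus | SMinus

definition lift_ch :: "'y bdmc \<Rightarrow> 'y pout bdmc" where
  "lift_ch W = (\<lambda>u. map_pmf Base (W u))"

definition minus_ch :: "'y pout bdmc \<Rightarrow> 'y pout bdmc" where
  "minus_ch W = (\<lambda>u1. bind_pmf (bernoulli_pmf (1/2)) (\<lambda>u2.
      bind_pmf (W (u1 \<noteq> u2)) (\<lambda>y1. map_pmf (\<lambda>y2. MinusOut y1 y2) (W u2))))"

definition plus_ch :: "'y pout bdmc \<Rightarrow> 'y pout bdmc" where
  "plus_ch W = (\<lambda>u2. bind_pmf (bernoulli_pmf (1/2)) (\<lambda>u1.
      bind_pmf (W (u1 \<noteq> u2)) (\<lambda>y1. map_pmf (\<lambda>y2. PlusOut y1 y2 u1) (W u2))))"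

definition pol_step :: "'y pout bdmc \<Rightarrow> polsign \<Rightarrow> 'y pout bdmc" where
  "pol_step W c = (case c of SPlus \<Rightarrow> plus_ch W | SMinus \<Rightarrow> minus_ch W)"

text \<open>W^{s_1...s_n} = (W^{s_1...s_{n-1}})^{s_n}: s_1 is applied first.\<close>
definition polarize :: "'y bdmc \<Rightarrow> polsign list \<Rightarrow> 'y pout bdmc" where
  "polarize W s = foldl pol_step (lift_ch W) s"

definition q_ch :: "'y bdmc \<Rightarrow> 'y pmf" where
  "q_ch W = bind_pmf (bernoulli_pmf (1/2)) W"

definition Delta :: "'y bdmc \<Rightarrow> 'y \<Rightarrow> real" where
  "Delta W y = (pmf (W False) y - pmf (W True) y) / (pmf (W False) y + pmf (W True) y)"

definition absDelta_law :: "'y bdmc \<Rightarrow> real pmf" where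
  "absDelta_law W = map_pmf (\<lambda>y. \<bar>Delta W y\<bar>) (q_ch W)"

definition icx_le :: "real pmf \<Rightarrow> real pmf \<Rightarrow> bool" where
  "icx_le X Y \<longleftrightarrow> (\<forall>\<psi>::real \<Rightarrow> real. mono \<psi> \<and> convex_on UNIV \<psi> \<and>
      integrable (measure_pmf X) \<psi> \<and> integrable (measure_pmf Y) \<psi> \<longrightarrow>
      measure_pmf.expectation X \<psi> \<le> measure_pmf.expectation Y \<psi>)"

definition info_set :: "nat \<Rightarrow> (real \<Rightarrow> real) \<Rightarrow> real \<Rightarrow> 'y bdmc \<Rightarrow> polsign list set" where
  "info_set n \<phi> \<epsilon> W = {s. length s = n \<and>
      measure_pmf.expectation (q_ch (polarize W s)) (\<lambda>y. \<phi> \<bar>Delta (polarize W s) y\<bar>) \<ge> 1 - \<epsilon>}"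

end

theory Submission
  imports Defs
begin

text \<open>Write q and \<Delta> for the output law and the bias of a channel, and let \<Delta>1, \<Delta>2 be
  independent copies of \<Delta>. One polarisation step acts on the law of |\<Delta>| through a symmetric
  kernel: E g |\<Delta>-| = E g |\<Delta>1 \<Delta>2| and E g |\<Delta>+| = E K_g(\<Delta>1, \<Delta>2), where
  K_g(a, b) = ((1 + ab) g |(a + b)/(1 + ab)| + (1 - ab) g |(a - b)/(1 - ab)|) / 2.
  If g is increasing and convex on [0,1], so are both kernels in each argument (for K_g, a
  perspective argument gives convexity on [-1,1] and evenness gives monotonicity). Hence the
  order "E g X \<le> E g Y for all such g" is preserved by each step, replacing one copy at a time,
  and by induction it passes to every W^s. It is implied by the increasing convex order of the
  finitely supported laws on [0,1], since such g agrees on a finite set with an increasing convex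
  function on the whole real line; and \<phi> is such a g.\<close>

section \<open>Convex functions of one real variable\<close>

lemma convex_on_abs_comp:
  fixes g :: "real \<Rightarrow> real"
  assumes mono: "mono_on {0..r} g" and conv: "convex_on {0..r} g"
  shows "convex_on {-r..r} (\<lambda>x. g \<bar>x\<bar>)"
proof (rule convex_onI)
  fix t x y :: real
  assume t: "0 < t" "t < 1" and x: "x \<in> {-r..r}" and y: "y \<in> {-r..r}"
  have abs_xy: "\<bar>x\<bar> \<in> {0..r}" "\<bar>y\<bar> \<in> {0..r}" using x y by auto
  have triangle: "\<bar>(1-t)*x + t*y\<bar> \<le> (1-t)*\<bar>x\<bar> + t*\<bar>y\<bar>"
    using abs_triangle_ineq[of "(1-t)*x" "t*y"] t by (simp add: abs_mult)
  have "(1-t)*\<bar>x\<bar> + t*\<bar>y\<bar> \<le> (1-t)*r + t*r"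
    using abs_xy t by (intro add_mono mult_left_mono) auto
  moreover have "0 \<le> (1-t)*\<bar>x\<bar> + t*\<bar>y\<bar>" using t by simp
  ultimately have "(1-t)*\<bar>x\<bar> + t*\<bar>y\<bar> \<in> {0..r}" by (simp add: algebra_simps)
  then have "g \<bar>(1-t)*x + t*y\<bar> \<le> g ((1-t)*\<bar>x\<bar> + t*\<bar>y\<bar>)"
    using triangle by (intro mono_onD[OF mono]) auto
  also have "\<dots> \<le> (1-t) * g \<bar>x\<bar> + t * g \<bar>y\<bar>"
    using convex_onD[OF conv, of t "\<bar>x\<bar>" "\<bar>y\<bar>"] t abs_xy by simp
  finally show "g \<bar>(1 - t) *\<^sub>R x + t *\<^sub>R y\<bar> \<le> (1 - t) * g \<bar>x\<bar> + t * g \<bar>y\<bar>" by simp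
qed auto

lemma even_convex_imp_mono_on:
  fixes f :: "real \<Rightarrow> real"
  assumes conv: "convex_on {-r..r} f" and even: "\<And>a. f (-a) = f a"
  shows "mono_on {0..r} f"
proof (rule mono_onI)
  fix a b :: real assume a: "a \<in> {0..r}" and b: "b \<in> {0..r}" and le: "a \<le> b"
  show "f a \<le> f b"
  proof (cases "b = 0")
    case True then show ?thesis using a le by auto
  next
    case False
    then have b_pos: "b > 0" using b by auto
    define l where "l = (b - a) / (2*b)"
    have l: "0 \<le> l" "l \<le> 1" using b_pos le a by (auto simp: l_def field_simps)
    have "a = (1-l)*b + l*(-b)" using b_pos by (simp add: l_def field_simps)
    then have "f a \<le> (1-l) * f b + l * f (-b)"
      using convex_onD[OF conv l, of b "-b"] b by auto
    also have "\<dots> = f b" using even by (simp add: algebra_simps)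
    finally show ?thesis .
  qed
qed

lemma convex_on_weighted:
  fixes \<psi> :: "real \<Rightarrow> real"
  assumes conv: "convex_on I \<psi>" and "x1 \<in> I" "x2 \<in> I" and w: "0 \<le> w1" "0 \<le> w2"
  shows "(w1 + w2) * \<psi> ((w1*x1 + w2*x2) / (w1 + w2)) \<le> w1 * \<psi> x1 + w2 * \<psi> x2"
proof (cases "w1 + w2 = 0")
  case True
  then have "w1 = 0" "w2 = 0" using w by linarith+
  then show ?thesis by simp
next
  case False
  then have pos: "w1 + w2 > 0" using w by linarith
  define l where "l = w2 / (w1 + w2)"
  have l: "0 \<le> l" "l \<le> 1" using w pos by (auto simp: l_def)
  have "(w1*x1 + w2*x2) / (w1 + w2) = (1-l)*x1 + l*x2"
    using pos by (simp add: l_def divide_simps)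
  then have "\<psi> ((w1*x1 + w2*x2) / (w1 + w2)) \<le> (1-l) * \<psi> x1 + l * \<psi> x2"
    using convex_onD[OF conv l assms(2,3)] by simp
  then have "(w1 + w2) * \<psi> ((w1*x1 + w2*x2) / (w1 + w2)) \<le> (w1 + w2) * ((1-l) * \<psi> x1 + l * \<psi> x2)"
    using pos by simp
  also have "\<dots> = w1 * \<psi> x1 + w2 * \<psi> x2"
    using pos by (simp add: l_def divide_simps)
  finally show ?thesis .
qed

lemma convex_on_perspective:
  fixes \<psi> :: "real \<Rightarrow> real"
  assumes conv: "convex_on {-1..1} \<psi>" and l: "0 \<le> l" "l \<le> 1"
    and u1: "\<bar>u1\<bar> \<le> t1" and u2: "\<bar>u2\<bar> \<le> t2"
  shows "((1-l)*t1 + l*t2) * \<psi> (((1-l)*u1 + l*u2) / ((1-l)*t1 + l*t2))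
     \<le> (1-l) * (t1 * \<psi> (u1/t1)) + l * (t2 * \<psi> (u2/t2))"
proof -
  have ratio: "u/t \<in> {-1..1}" and cancel: "t * (u/t) = u" if "\<bar>u\<bar> \<le> t" for u t :: real
    using that by (cases "t = 0"; auto simp: abs_le_iff field_simps)+
  have "(1-l)*t1 \<ge> 0" "l*t2 \<ge> 0" using l u1 u2 by auto
  from convex_on_weighted[OF conv ratio[OF u1] ratio[OF u2] this]
  show ?thesis by (simp only: cancel[OF u1] cancel[OF u2] mult.assoc)
qed

lemma convex_chord_le_outside:
  fixes g :: "real \<Rightarrow> real"
  assumes conv: "convex_on I g" and I: "p \<in> I" "r \<in> I" "q \<in> I" and pr: "p < r"
    and outside: "q \<le> p \<or> r \<le> q"
  shows "g p + (g r - g p) / (r - p) * (q - p) \<le> g q"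
proof -
  consider "q < p" | "q = p" | "r \<le> q" using outside by linarith
  then show ?thesis
  proof cases
    case 1
    have "(g q - g p) / (q - p) \<le> (g q - g r) / (q - r)"
      and "(g q - g r) / (q - r) \<le> (g p - g r) / (p - r)"
      using convex_on_slope_le[OF conv I(3) I(2) 1 pr] by auto
    then have "(g r - g p) / (r - p) \<ge> (g q - g p) / (q - p)"
      by (simp add: divide_simps algebra_simps split: if_splits; linarith)
    then have "(g r - g p) / (r - p) * (q - p) \<le> (g q - g p) / (q - p) * (q - p)"
      using 1 by (intro mult_right_mono_neg) auto
    then show ?thesis using 1 by simp
  next
    case 2
    then show ?thesis by simp
  next
    case 3
    show ?thesis
    proof (cases "r = q")
      case True
      then show ?thesis using pr by simp
    next
      case False
      then have "(g p - g r) / (p - r) \<le> (g p - g q) / (p - q)"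
        using convex_on_slope_le(1)[OF conv I(1) I(3) pr] 3 by simp
      then have "(g r - g p) / (r - p) * (q - p) \<le> (g q - g p) / (q - p) * (q - p)"
        using pr 3 by (intro mult_right_mono) (auto simp: divide_simps algebra_simps)
      then show ?thesis using pr 3 by simp
    qed
  qed
qed

lemma mono_convex_Max_affine:
  fixes a s :: "'a \<Rightarrow> real"
  assumes L: "finite L" and s: "\<And>c. c \<in> L \<Longrightarrow> 0 \<le> s c"
  shows "mono (\<lambda>x. Max (insert b ((\<lambda>c. a c + s c * x) ` L)))"
    and "convex_on UNIV (\<lambda>x. Max (insert b ((\<lambda>c. a c + s c * x) ` L)))"
proof -
  let ?\<psi> = "\<lambda>x. Max (insert b ((\<lambda>c. a c + s c * x) ` L))"
  have ge: "a c + s c * x \<le> ?\<psi> x" if "c \<in> L" for c x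
    using L that by (intro Max_ge) auto
  have b_le: "b \<le> ?\<psi> x" for x
    using L by (intro Max_ge) auto
  show "mono ?\<psi>"
  proof (rule monoI)
    fix x y :: real assume "x \<le> y"
    then have "a c + s c * x \<le> ?\<psi> y" if "c \<in> L" for c
      using ge[OF that, of y] mult_left_mono[OF \<open>x \<le> y\<close> s[OF that]] by linarith
    then show "?\<psi> x \<le> ?\<psi> y" using L b_le by (subst Max_le_iff) auto
  qed
  show "convex_on UNIV ?\<psi>"
  proof (rule convex_onI)
    fix t x y :: real assume t: "0 < t" "t < 1"
    have "(1-t) * b + t * b \<le> (1-t) * ?\<psi> x + t * ?\<psi> y"
      using t by (intro add_mono mult_left_mono b_le) auto
    then have "b \<le> (1-t) * ?\<psi> x + t * ?\<psi> y" by (simp add: algebra_simps)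
    moreover have "a c + s c * ((1-t)*x + t*y) \<le> (1-t) * ?\<psi> x + t * ?\<psi> y" if "c \<in> L" for c
    proof -
      have "a c + s c * ((1-t)*x + t*y) = (1-t) * (a c + s c * x) + t * (a c + s c * y)"
        by (simp add: algebra_simps)
      also have "\<dots> \<le> (1-t) * ?\<psi> x + t * ?\<psi> y"
        using t by (intro add_mono mult_left_mono ge[OF that]) auto
      finally show ?thesis .
    qed
    ultimately show "?\<psi> ((1 - t) *\<^sub>R x + t *\<^sub>R y) \<le> (1 - t) * ?\<psi> x + t * ?\<psi> y"
      using L by (subst Max_le_iff) auto
  qed auto
qed

lemma finite_predecessorE:
  fixes T :: "'a::linorder set"
  assumes T: "finite T" and q: "q \<in> T" "q \<noteq> Min T"
  obtains p where "p \<in> T" "p < q" "\<And>r. r \<in> T \<Longrightarrow> r \<le> p \<or> q \<le> r"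
proof -
  have "Min T < q" using q T by (simp add: order_less_le)
  then have below: "{r \<in> T. r < q} \<noteq> {}" using q T by (auto intro: Min_in[of T])
  define p where "p = Max {r \<in> T. r < q}"
  have "p \<in> T" "p < q" using Max_in[OF _ below] T by (auto simp: p_def)
  moreover have "r \<le> p \<or> q \<le> r" if "r \<in> T" for r
    using that T by (cases "r < q") (auto simp: p_def)
  ultimately show ?thesis by (rule that)
qed

text \<open>Interpolate g linearly between consecutive points of T; below Min T the constant g (Min T)
  takes over.\<close>

lemma mono_convex_extend_finite:
  fixes g :: "real \<Rightarrow> real"
  assumes mono: "mono_on I g" and conv: "convex_on I g" and T: "finite T" "T \<subseteq> I"
  obtains \<psi> where "mono \<psi>" "convex_on UNIV \<psi>" "\<And>q. q \<in> T \<Longrightarrow> \<psi> q = g q"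
proof -
  define C where "C = {(p, n). p \<in> T \<and> n \<in> T \<and> p < n \<and> (\<forall>r\<in>T. r \<le> p \<or> n \<le> r)}"
  define s where "s = (\<lambda>(p, n). (g n - g p) / (n - p))"
  define a where "a = (\<lambda>(p, n). g p - s (p, n) * p)"
  define \<psi> where "\<psi> x = Max (insert (g (Min T)) ((\<lambda>c. a c + s c * x) ` C))" for x
  have C: "finite C" using T by (intro finite_subset[of C "T \<times> T"]) (auto simp: C_def)
  have s_nonneg: "0 \<le> s c" if "c \<in> C" for c
    using that T mono_onD[OF mono] by (auto simp: C_def s_def subset_iff)
  have line_le: "a c + s c * q \<le> g q" if c: "c \<in> C" and q: "q \<in> T" for c q
  proof -
    obtain p n where pn: "c = (p, n)" and "p \<in> T" "n \<in> T" "p < n" "q \<le> p \<or> n \<le> q"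
      using c q by (auto simp: C_def)
    then have "g p + (g n - g p) / (n - p) * (q - p) \<le> g q"
      using T q by (intro convex_chord_le_outside[OF conv]) auto
    then show ?thesis by (simp add: pn a_def s_def right_diff_distrib)
  qed
  have agree: "\<psi> q = g q" if q: "q \<in> T" for q
  proof (rule antisym)
    have "Min T \<in> T" using q T by (intro Min_in) auto
    then have "g (Min T) \<le> g q" using q T by (intro mono_onD[OF mono]) auto
    then show "\<psi> q \<le> g q" using line_le q C by (auto simp: \<psi>_def)
    show "g q \<le> \<psi> q"
    proof (cases "q = Min T")
      case True
      then show ?thesis using C by (auto simp: \<psi>_def)
    next
      case False
      then obtain p where "p \<in> T" "p < q" "\<And>r. r \<in> T \<Longrightarrow> r \<le> p \<or> q \<le> r"
        using finite_predecessorE[OF T(1) q] by blast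
      then have "(p, q) \<in> C" using q by (auto simp: C_def)
      moreover have "a (p, q) + s (p, q) * q = g q"
      proof -
        have "s (p, q) * (q - p) = g q - g p" using \<open>p < q\<close> by (simp add: s_def)
        then show ?thesis unfolding a_def by (simp add: right_diff_distrib)
      qed
      ultimately have "g q \<in> (\<lambda>c. a c + s c * q) ` C" by (intro image_eqI[where x="(p, q)"]) auto
      then show ?thesis using C unfolding \<psi>_def by (intro Max_ge) auto
    qed
  qed
  have "mono \<psi>" "convex_on UNIV \<psi>"
    unfolding \<psi>_def using mono_convex_Max_affine[of C s, OF C s_nonneg] by blast+
  then show ?thesis using agree by (rule that)
qed

section \<open>The increasing convex order tested on [0,1]\<close>

definition mono_convex01 :: "(real \<Rightarrow> real) \<Rightarrow> bool" where
  "mono_convex01 g \<longleftrightarrow> mono_on {0..1} g \<and> convex_on {0..1} g"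

definition icx01_le :: "real pmf \<Rightarrow> real pmf \<Rightarrow> bool" where
  "icx01_le X Y \<longleftrightarrow> (\<forall>g. mono_convex01 g \<longrightarrow>
      measure_pmf.expectation X g \<le> measure_pmf.expectation Y g)"

lemma expectation_mono_finite_pmf:
  fixes f g :: "'a \<Rightarrow> real"
  assumes "finite (set_pmf X)" and "\<And>x. x \<in> set_pmf X \<Longrightarrow> f x \<le> g x"
  shows "measure_pmf.expectation X f \<le> measure_pmf.expectation X g"
  using assms by (intro integral_mono_AE) (auto simp: AE_measure_pmf_iff integrable_measure_pmf_finite)

lemma mono_convex01_expectation:
  fixes K :: "real \<Rightarrow> 'a \<Rightarrow> real"
  assumes X: "finite (set_pmf X)" and K: "\<And>b. b \<in> set_pmf X \<Longrightarrow> mono_convex01 (\<lambda>a. K a b)"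
  shows "mono_convex01 (\<lambda>a. measure_pmf.expectation X (K a))"
  unfolding mono_convex01_def
proof
  show "mono_on {0..1} (\<lambda>a. measure_pmf.expectation X (K a))"
  proof (rule mono_onI)
    fix r s :: real assume "r \<in> {0..1}" "s \<in> {0..1}" "r \<le> s"
    then show "measure_pmf.expectation X (K r) \<le> measure_pmf.expectation X (K s)"
      using K by (intro expectation_mono_finite_pmf[OF X]) (auto simp: mono_convex01_def mono_on_def)
  qed
  show "convex_on {0..1} (\<lambda>a. measure_pmf.expectation X (K a))"
  proof (rule convex_onI)
    fix t x y :: real assume t: "0 < t" "t < 1" and xy: "x \<in> {0..1}" "y \<in> {0..1}"
    have "measure_pmf.expectation X (K ((1-t)*x + t*y))
        \<le> measure_pmf.expectation X (\<lambda>b. (1-t) * K x b + t * K y b)"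
    proof (rule expectation_mono_finite_pmf[OF X])
      fix b assume "b \<in> set_pmf X"
      then have "convex_on {0..1} (\<lambda>a. K a b)" using K by (simp add: mono_convex01_def)
      from convex_onD[OF this, of t x y] t xy
      show "K ((1-t)*x + t*y) b \<le> (1-t) * K x b + t * K y b" by simp
    qed
    also have "\<dots> = (1-t) * measure_pmf.expectation X (K x) + t * measure_pmf.expectation X (K y)"
      using X by (simp add: integrable_measure_pmf_finite)
    finally show "measure_pmf.expectation X (K ((1 - t) *\<^sub>R x + t *\<^sub>R y))
        \<le> (1 - t) * measure_pmf.expectation X (K x) + t * measure_pmf.expectation X (K y)" by simp
  qed auto
qed

lemma icx_le_imp_icx01_le:
  assumes X: "finite (set_pmf X)" "set_pmf X \<subseteq> {0..1}"
    and Y: "finite (set_pmf Y)" "set_pmf Y \<subseteq> {0..1}"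
    and icx: "icx_le X Y"
  shows "icx01_le X Y"
  unfolding icx01_le_def
proof (intro allI impI)
  fix g assume "mono_convex01 g"
  then obtain \<psi> where \<psi>: "mono \<psi>" "convex_on UNIV \<psi>"
    and agree: "\<And>q. q \<in> set_pmf X \<union> set_pmf Y \<Longrightarrow> \<psi> q = g q"
    using mono_convex_extend_finite[of "{0..1}" g "set_pmf X \<union> set_pmf Y"] X Y
    by (auto simp: mono_convex01_def)
  have "measure_pmf.expectation X g = measure_pmf.expectation X \<psi>"
    using agree by (intro integral_cong_AE) (auto simp: AE_measure_pmf_iff)
  also have "\<dots> \<le> measure_pmf.expectation Y \<psi>"
    using icx \<psi> X(1) Y(1) by (simp add: icx_le_def integrable_measure_pmf_finite)
  also have "\<dots> = measure_pmf.expectation Y g"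
    using agree by (intro integral_cong_AE) (auto simp: AE_measure_pmf_iff)
  finally show "measure_pmf.expectation X g \<le> measure_pmf.expectation Y g" .
qed

text \<open>With a symmetric kernel, replacing X by Y in one coordinate at a time.\<close>

lemma icx01_le_double_expectation:
  assumes X: "finite (set_pmf X)" "set_pmf X \<subseteq> {0..1}"
    and Y: "finite (set_pmf Y)" "set_pmf Y \<subseteq> {0..1}"
    and le: "icx01_le X Y"
    and K: "\<And>b. b \<in> {0..1} \<Longrightarrow> mono_convex01 (\<lambda>a. K a b)"
    and sym: "\<And>a b. K a b = K b a"
  shows "measure_pmf.expectation X (\<lambda>a. measure_pmf.expectation X (K a))
      \<le> measure_pmf.expectation Y (\<lambda>a. measure_pmf.expectation Y (K a))"
proof -
  have "mono_convex01 (\<lambda>a. measure_pmf.expectation X (K a))"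
    using X K by (intro mono_convex01_expectation) auto
  then have "measure_pmf.expectation X (\<lambda>a. measure_pmf.expectation X (K a))
      \<le> measure_pmf.expectation Y (\<lambda>a. measure_pmf.expectation X (K a))"
    using le by (simp add: icx01_le_def)
  also have "\<dots> \<le> measure_pmf.expectation Y (\<lambda>a. measure_pmf.expectation Y (K a))"
  proof (rule expectation_mono_finite_pmf[OF Y(1)])
    fix a assume "a \<in> set_pmf Y"
    moreover have "K a = (\<lambda>b. K b a)" using sym by (simp add: fun_eq_iff)
    ultimately have "mono_convex01 (K a)" using K[of a] Y(2) by auto
    then show "measure_pmf.expectation X (K a) \<le> measure_pmf.expectation Y (K a)"
      using le by (simp add: icx01_le_def)
  qed
  finally show ?thesis .
qed

section \<open>The polarisation kernels\<close>

definition plus_kernel :: "(real \<Rightarrow> real) \<Rightarrow> real \<Rightarrow> real \<Rightarrow> real" where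
  "plus_kernel g a b =
     ((1 + a*b) * g \<bar>(a+b) / (1 + a*b)\<bar> + (1 - a*b) * g \<bar>(a-b) / (1 - a*b)\<bar>) / 2"

lemma plus_kernel_commute: "plus_kernel g a b = plus_kernel g b a"
  unfolding plus_kernel_def by (simp add: algebra_simps abs_minus_commute)

lemma plus_kernel_uminus_left: "plus_kernel g (-a) b = plus_kernel g a b"
proof -
  have "(-a - b) / (1 - -a*b) = - ((a + b) / (1 + a*b))"
    and "(-a + b) / (1 + -a*b) = - ((a - b) / (1 - a*b))"
    by (simp_all only: minus_divide_left) (simp_all add: algebra_simps)
  then show ?thesis by (simp add: plus_kernel_def algebra_simps)
qed

lemma plus_kernel_abs: "plus_kernel g \<bar>a\<bar> \<bar>b\<bar> = plus_kernel g a b"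
proof -
  have left: "plus_kernel g \<bar>x\<bar> y = plus_kernel g x y" for x y
    by (cases "x \<ge> 0") (simp_all add: plus_kernel_uminus_left)
  show ?thesis using left[of a "\<bar>b\<bar>"] left[of b a] by (simp add: plus_kernel_commute)
qed

lemma abs_add_le_one_add_mult:
  fixes a b :: real
  assumes "a \<in> {-1..1}" "b \<in> {-1..1}"
  shows "\<bar>a + b\<bar> \<le> 1 + a*b" and "\<bar>a - b\<bar> \<le> 1 - a*b"
proof -
  have "0 \<le> (1-a)*(1-b)" "0 \<le> (1+a)*(1+b)" "0 \<le> (1-a)*(1+b)" "0 \<le> (1+a)*(1-b)"
    using assms by (auto intro!: mult_nonneg_nonneg)
  then show "\<bar>a + b\<bar> \<le> 1 + a*b" "\<bar>a - b\<bar> \<le> 1 - a*b"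
    by (auto simp: abs_le_iff algebra_simps)
qed

text \<open>Each summand of the plus kernel is a perspective t \<psi>(u/t) of \<psi> = g \<circ> abs, evaluated at
  the affine functions t = 1 \<plusminus> a b and u = a \<plusminus> b of a.\<close>

lemma convex_on_plus_kernel:
  assumes g: "mono_convex01 g" and b: "b \<in> {-1..1}"
  shows "convex_on {-1..1} (\<lambda>a. plus_kernel g a b)"
proof (rule convex_onI)
  fix l a1 a2 :: real
  assume l: "0 < l" "l < 1" and a: "a1 \<in> {-1..1}" "a2 \<in> {-1..1}"
  define \<psi> where "\<psi> = (\<lambda>x. g \<bar>x\<bar>)"
  have \<psi>: "convex_on {-1..1} \<psi>"
    using g convex_on_abs_comp[of 1 g] by (simp add: mono_convex01_def \<psi>_def)
  define a where "a = (1-l)*a1 + l*a2"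
  have kernel: "plus_kernel g x b =
      ((1 + x*b) * \<psi> ((x+b) / (1 + x*b)) + (1 - x*b) * \<psi> ((x-b) / (1 - x*b))) / 2" for x
    by (simp add: plus_kernel_def \<psi>_def)
  have affine: "(1-l)*(1 + a1*b) + l*(1 + a2*b) = 1 + a*b"
    "(1-l)*(1 - a1*b) + l*(1 - a2*b) = 1 - a*b"
    "(1-l)*(a1+b) + l*(a2+b) = a + b" "(1-l)*(a1-b) + l*(a2-b) = a - b"
    by (simp_all add: a_def algebra_simps)
  have "(1 + a*b) * \<psi> ((a+b) / (1 + a*b))
      \<le> (1-l) * ((1 + a1*b) * \<psi> ((a1+b) / (1 + a1*b))) + l * ((1 + a2*b) * \<psi> ((a2+b) / (1 + a2*b)))"
    and "(1 - a*b) * \<psi> ((a-b) / (1 - a*b))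
      \<le> (1-l) * ((1 - a1*b) * \<psi> ((a1-b) / (1 - a1*b))) + l * ((1 - a2*b) * \<psi> ((a2-b) / (1 - a2*b)))"
    using convex_on_perspective[OF \<psi>, of l] l
      abs_add_le_one_add_mult[OF a(1) b] abs_add_le_one_add_mult[OF a(2) b]
    by (simp_all only: affine[symmetric])
  moreover have "P \<le> x*P1 + y*P2 \<Longrightarrow> Q \<le> x*Q1 + y*Q2 \<Longrightarrow>
      (P + Q)/2 \<le> x*((P1 + Q1)/2) + y*((P2 + Q2)/2)" for P Q P1 P2 Q1 Q2 x y :: real
    by (simp add: distrib_left add_divide_distrib)
  ultimately have "plus_kernel g a b \<le> (1 - l) * plus_kernel g a1 b + l * plus_kernel g a2 b"
    unfolding kernel by blast
  then show "plus_kernel g ((1 - l) *\<^sub>R a1 + l *\<^sub>R a2) b \<le> (1 - l) * plus_kernel g a1 b + l * plus_kernel g a2 b"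
    by (simp add: a_def)
qed auto

lemma mono_convex01_plus_kernel:
  assumes "mono_convex01 g" and "b \<in> {-1..1}"
  shows "mono_convex01 (\<lambda>a. plus_kernel g a b)"
proof -
  have conv: "convex_on {-1..1} (\<lambda>a. plus_kernel g a b)"
    using assms by (rule convex_on_plus_kernel)
  then show ?thesis
    using even_convex_imp_mono_on[OF conv plus_kernel_uminus_left] convex_on_subset[OF conv]
    by (simp add: mono_convex01_def)
qed

lemma mono_convex01_abs_mult:
  assumes g: "mono_convex01 g" and b: "b \<in> {-1..1}"
  shows "mono_convex01 (\<lambda>a. g \<bar>a*b\<bar>)"
proof -
  have scaled: "\<bar>a*b\<bar> = a * \<bar>b\<bar>" "a * \<bar>b\<bar> \<in> {0..1}" if "a \<in> {0..1}" for a
    using that b by (auto simp: abs_mult intro: mult_le_one)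
  have mono: "mono_on {0..1} g" and conv: "convex_on {0..1} g"
    using g by (auto simp: mono_convex01_def)
  have "mono_on {0..1} (\<lambda>a. g \<bar>a*b\<bar>)"
  proof (rule mono_onI)
    fix r s :: real assume "r \<in> {0..1}" "s \<in> {0..1}" "r \<le> s"
    then show "g \<bar>r*b\<bar> \<le> g \<bar>s*b\<bar>"
      using scaled[of r] scaled[of s] by (auto intro!: mono_onD[OF mono] mult_right_mono)
  qed
  moreover have "convex_on {0..1} (\<lambda>a. g \<bar>a*b\<bar>)"
  proof (rule convex_onI)
    fix t x y :: real assume t: "0 < t" "t < 1" and xy: "x \<in> {0..1}" "y \<in> {0..1}"
    have "0 \<le> (1-t)*x + t*y" using t xy by simp
    then have "\<bar>((1-t)*x + t*y) * b\<bar> = (1-t)*(x*\<bar>b\<bar>) + t*(y*\<bar>b\<bar>)"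
      by (simp only: abs_mult abs_of_nonneg) (simp add: algebra_simps)
    also have "g \<dots> \<le> (1-t) * g (x*\<bar>b\<bar>) + t * g (y*\<bar>b\<bar>)"
      using convex_onD[OF conv, of t "x*\<bar>b\<bar>" "y*\<bar>b\<bar>"] scaled xy t by simp
    finally show "g \<bar>((1 - t) *\<^sub>R x + t *\<^sub>R y) * b\<bar> \<le> (1 - t) * g \<bar>x*b\<bar> + t * g \<bar>y*b\<bar>"
      using scaled xy by simp
  qed auto
  ultimately show ?thesis by (simp add: mono_convex01_def)
qed

section \<open>Polarised channels in terms of q and \<Delta>\<close>

lemma pmf_bind_map_pair:
  assumes inj: "\<And>a b a' b'. C a b = C a' b' \<Longrightarrow> a = a' \<and> b = b'"
  shows "pmf (bind_pmf M (\<lambda>a. map_pmf (C a) N)) (C a b) = pmf M a * pmf N b"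
proof -
  have "pmf (map_pmf (C a') N) (C a b) = (if a' = a then pmf N b else 0)" for a'
  proof (cases "a' = a")
    case True
    have "inj (C a)" using inj by (auto intro: injI)
    then show ?thesis using True by (simp add: pmf_map_inj')
  next
    case False
    then have "C a b \<notin> set_pmf (map_pmf (C a') N)" using inj by auto
    then show ?thesis using False by (simp add: pmf_eq_0_set_pmf)
  qed
  then have "pmf (bind_pmf M (\<lambda>a. map_pmf (C a) N)) (C a b)
      = measure_pmf.expectation M (\<lambda>a'. if a' = a then pmf N b else 0)"
    by (simp add: pmf_bind)
  also have "\<dots> = pmf M a * pmf N b"
    by (subst integral_measure_pmf_real[of "{a}"]) (auto split: if_splits)
  finally show ?thesis .
qed

lemma expectation_pmf_reindex:
  fixes h :: "'b \<Rightarrow> real"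
  assumes S: "finite S" "inj_on f S" and support: "set_pmf M \<subseteq> f ` S"
  shows "measure_pmf.expectation M h = (\<Sum>x\<in>S. pmf M (f x) * h (f x))"
proof -
  have "measure_pmf.expectation M h = (\<Sum>z\<in>f ` S. h z * pmf M z)"
    using S support by (intro integral_measure_pmf_real) auto
  also have "\<dots> = (\<Sum>x\<in>S. pmf M (f x) * h (f x))"
    by (simp add: sum.reindex[OF S(2)] mult.commute)
  finally show ?thesis .
qed

lemma expectation_pmf_double:
  fixes k :: "'a \<Rightarrow> 'a \<Rightarrow> real"
  assumes "finite A" and "set_pmf M \<subseteq> A"
  shows "measure_pmf.expectation M (\<lambda>x. measure_pmf.expectation M (k x))
    = (\<Sum>(x, y)\<in>A \<times> A. pmf M x * pmf M y * k x y)"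
proof -
  have inner: "measure_pmf.expectation M (k x) = (\<Sum>y\<in>A. k x y * pmf M y)" for x
    using assms by (intro integral_measure_pmf_real) auto
  have "measure_pmf.expectation M (\<lambda>x. measure_pmf.expectation M (k x))
      = (\<Sum>x\<in>A. (\<Sum>y\<in>A. k x y * pmf M y) * pmf M x)"
    unfolding inner using assms by (intro integral_measure_pmf_real) auto
  also have "\<dots> = (\<Sum>(x, y)\<in>A \<times> A. pmf M x * pmf M y * k x y)"
    by (simp add: sum.cartesian_product[symmetric] sum_distrib_left sum_distrib_right mult_ac)
  finally show ?thesis .
qed

lemma is_bdmc_finite: "is_bdmc U \<Longrightarrow> finite (set_pmf (U u))"
  by (cases u) (auto simp: is_bdmc_def)

lemma pmf_q_ch: "pmf (q_ch U) y = (pmf (U False) y + pmf (U True) y) / 2"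
  by (simp add: q_ch_def pmf_bind)

lemma set_pmf_q_ch: "set_pmf (q_ch U) = set_pmf (U False) \<union> set_pmf (U True)"
  by (auto simp: q_ch_def set_pmf_bernoulli UNIV_bool)

lemma set_pmf_subset_q_ch: "set_pmf (U u) \<subseteq> set_pmf (q_ch U)"
  by (cases u) (auto simp: set_pmf_q_ch)

lemma is_bdmc_plus_ch:
  assumes "is_bdmc U"
  shows "is_bdmc (plus_ch U)"
proof -
  have "finite (set_pmf (U u))" for u using assms by (rule is_bdmc_finite)
  then show ?thesis by (simp add: is_bdmc_def plus_ch_def)
qed

lemma is_bdmc_minus_ch:
  assumes "is_bdmc U"
  shows "is_bdmc (minus_ch U)"
proof -
  have "finite (set_pmf (U u))" for u using assms by (rule is_bdmc_finite)
  then show ?thesis by (simp add: is_bdmc_def minus_ch_def)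
qed

lemma is_bdmc_polarize: "is_bdmc W \<Longrightarrow> is_bdmc (polarize W s)"
proof (induction s rule: rev_induct)
  case Nil
  then show ?case by (simp add: polarize_def lift_ch_def is_bdmc_def)
next
  case (snoc c s)
  then show ?case
    by (cases c) (simp_all add: polarize_def pol_step_def is_bdmc_plus_ch is_bdmc_minus_ch)
qed

definition sign_of :: "bool \<Rightarrow> real" where
  "sign_of u = (if u then -1 else 1)"

text \<open>The paper's parametrisation W(y|u) = q_W(y) (1 + (-1)^u \<Delta>_W(y)); it also holds where
  q_W(y) = 0, because then \<Delta>_W(y) = 0/0 = 0.\<close>

lemma pmf_eq_q_ch_Delta: "pmf (U u) y = pmf (q_ch U) y * (1 + sign_of u * Delta U y)"
proof (cases "pmf (U False) y + pmf (U True) y = 0")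
  case True
  then have "pmf (U False) y = 0" "pmf (U True) y = 0" by (simp_all add: add_nonneg_eq_0_iff)
  then show ?thesis by (cases u) (simp_all add: pmf_q_ch)
next
  case False
  then show ?thesis by (cases u) (simp_all add: pmf_q_ch Delta_def sign_of_def field_simps)
qed

lemma Delta_eq_0_if_q_ch_eq_0: "pmf (q_ch U) y = 0 \<Longrightarrow> Delta U y = 0"
  by (simp add: pmf_q_ch Delta_def)

lemma abs_Delta_le_1: "\<bar>Delta U y\<bar> \<le> 1"
proof -
  have "\<bar>pmf (U False) y - pmf (U True) y\<bar> \<le> \<bar>pmf (U False) y + pmf (U True) y\<bar>"
    using pmf_nonneg[of "U False" y] pmf_nonneg[of "U True" y] by linarith
  then show ?thesis by (simp add: Delta_def abs_divide divide_le_eq_1 abs_le_iff; linarith)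
qed

lemma pmf_plus_ch:
  "pmf (plus_ch U u2) (PlusOut y1 y2 u1) = pmf (U (u1 \<noteq> u2)) y1 * pmf (U u2) y2 / 2"
proof -
  have "pmf (bind_pmf M (\<lambda>y1. map_pmf (\<lambda>y2. PlusOut y1 y2 v) N)) (PlusOut y1 y2 u1)
      = (if v = u1 then pmf M y1 * pmf N y2 else 0)" for M N v
  proof (cases "v = u1")
    case True
    have "pmf (bind_pmf M (\<lambda>y1. map_pmf (\<lambda>y2. PlusOut y1 y2 u1) N)) (PlusOut y1 y2 u1)
        = pmf M y1 * pmf N y2"
      by (rule pmf_bind_map_pair) simp
    then show ?thesis using True by simp
  next
    case False
    then show ?thesis by (auto simp: pmf_eq_0_set_pmf)
  qed
  then show ?thesis by (cases u1) (simp_all add: plus_ch_def pmf_bind)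
qed

lemma pmf_minus_ch:
  "pmf (minus_ch U u1) (MinusOut y1 y2)
     = (pmf (U u1) y1 * pmf (U False) y2 + pmf (U (\<not> u1)) y1 * pmf (U True) y2) / 2"
proof -
  have "pmf (bind_pmf M (\<lambda>y1. map_pmf (MinusOut y1) N)) (MinusOut y1 y2) = pmf M y1 * pmf N y2"
    for M N by (rule pmf_bind_map_pair) simp
  then show ?thesis by (cases u1) (simp_all add: minus_ch_def pmf_bind)
qed

lemma pmf_minus_ch_q_ch:
  "pmf (minus_ch U u) (MinusOut y1 y2)
     = pmf (q_ch U) y1 * pmf (q_ch U) y2 * (1 + sign_of u * Delta U y1 * Delta U y2)"
  by (cases u) (simp_all add: pmf_minus_ch pmf_eq_q_ch_Delta[of U] sign_of_def field_simps)

lemma pmf_q_ch_minus_ch: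
  "pmf (q_ch (minus_ch U)) (MinusOut y1 y2) = pmf (q_ch U) y1 * pmf (q_ch U) y2"
  by (simp add: pmf_q_ch[of "minus_ch U"] pmf_minus_ch_q_ch sign_of_def field_simps)

lemma Delta_minus_ch: "Delta (minus_ch U) (MinusOut y1 y2) = Delta U y1 * Delta U y2"
proof (cases "pmf (q_ch U) y1 = 0 \<or> pmf (q_ch U) y2 = 0")
  case True
  then have "pmf (minus_ch U u) (MinusOut y1 y2) = 0" for u by (auto simp: pmf_minus_ch_q_ch)
  moreover have "Delta U y1 * Delta U y2 = 0" using True by (auto simp: Delta_eq_0_if_q_ch_eq_0)
  ultimately show ?thesis by (simp add: Delta_def[of "minus_ch U"])
next
  case False
  then show ?thesis by (simp add: Delta_def[of "minus_ch U"] pmf_minus_ch_q_ch sign_of_def field_simps)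
qed

lemma pmf_plus_ch_q_ch:
  "pmf (plus_ch U v) (PlusOut y1 y2 u) = pmf (q_ch U) y1 * pmf (q_ch U) y2
     * (1 + sign_of u * sign_of v * Delta U y1) * (1 + sign_of v * Delta U y2) / 2"
  by (cases u; cases v) (simp_all add: pmf_plus_ch pmf_eq_q_ch_Delta[of U] sign_of_def)

lemma pmf_q_ch_plus_ch:
  "pmf (q_ch (plus_ch U)) (PlusOut y1 y2 u)
     = pmf (q_ch U) y1 * pmf (q_ch U) y2 * (1 + sign_of u * Delta U y1 * Delta U y2) / 2"
  by (simp add: pmf_q_ch[of "plus_ch U"] pmf_plus_ch_q_ch sign_of_def field_simps)

lemma Delta_plus_ch:
  assumes "pmf (q_ch U) y1 \<noteq> 0" and "pmf (q_ch U) y2 \<noteq> 0"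
  shows "Delta (plus_ch U) (PlusOut y1 y2 u)
     = (sign_of u * Delta U y1 + Delta U y2) / (1 + sign_of u * Delta U y1 * Delta U y2)"
proof -
  let ?z = "PlusOut y1 y2 u" and ?c = "pmf (q_ch U) y1 * pmf (q_ch U) y2"
  let ?s = "sign_of u" and ?d1 = "Delta U y1" and ?d2 = "Delta U y2"
  have F: "pmf (plus_ch U False) ?z = ?c * ((1 + ?s * ?d1) * (1 + ?d2)) / 2"
    and T: "pmf (plus_ch U True) ?z = ?c * ((1 - ?s * ?d1) * (1 - ?d2)) / 2"
    by (simp_all add: pmf_plus_ch_q_ch sign_of_def)
  have "pmf (plus_ch U False) ?z - pmf (plus_ch U True) ?z = ?c * (?s * ?d1 + ?d2)"
    and "pmf (plus_ch U False) ?z + pmf (plus_ch U True) ?z = ?c * (1 + ?s * ?d1 * ?d2)"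
    unfolding F T by (simp_all add: field_simps)
  then show ?thesis using assms by (simp add: Delta_def[of "plus_ch U"])
qed

lemma sum_plus_ch_outputs:
  "(\<Sum>u\<in>UNIV. pmf (q_ch (plus_ch U)) (PlusOut y1 y2 u) * g \<bar>Delta (plus_ch U) (PlusOut y1 y2 u)\<bar>)
     = pmf (q_ch U) y1 * pmf (q_ch U) y2 * plus_kernel g (Delta U y1) (Delta U y2)"
proof (cases "pmf (q_ch U) y1 = 0 \<or> pmf (q_ch U) y2 = 0")
  case True
  then show ?thesis by (auto simp: pmf_q_ch_plus_ch)
next
  case False
  let ?c = "pmf (q_ch U) y1 * pmf (q_ch U) y2" and ?d1 = "Delta U y1" and ?d2 = "Delta U y2"
  have "(\<Sum>u\<in>UNIV. pmf (q_ch (plus_ch U)) (PlusOut y1 y2 u) * g \<bar>Delta (plus_ch U) (PlusOut y1 y2 u)\<bar>)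
      = ?c * (1 + ?d1 * ?d2) / 2 * g \<bar>(?d1 + ?d2) / (1 + ?d1 * ?d2)\<bar>
        + ?c * (1 - ?d1 * ?d2) / 2 * g \<bar>(?d1 - ?d2) / (1 - ?d1 * ?d2)\<bar>"
    using False by (simp add: UNIV_bool pmf_q_ch_plus_ch Delta_plus_ch sign_of_def abs_minus_commute)
  also have "\<dots> = ?c * plus_kernel g ?d1 ?d2"
  proof -
    have "c * (1 + p) / 2 * G1 + c * (1 - p) / 2 * G2 = c * (((1 + p) * G1 + (1 - p) * G2) / 2)"
      for c p G1 G2 :: real
      by (simp add: field_simps)
    then show ?thesis unfolding plus_kernel_def .
  qed
  finally show ?thesis .
qed

lemma expectation_q_ch_minus_ch:
  fixes g :: "real \<Rightarrow> real"
  assumes "is_bdmc U"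
  shows "measure_pmf.expectation (q_ch (minus_ch U)) (\<lambda>z. g \<bar>Delta (minus_ch U) z\<bar>)
    = measure_pmf.expectation (q_ch U) (\<lambda>y1. measure_pmf.expectation (q_ch U)
        (\<lambda>y2. g \<bar>Delta U y1 * Delta U y2\<bar>))"
proof -
  let ?A = "set_pmf (q_ch U)"
  have A: "finite ?A" using assms by (simp add: set_pmf_q_ch is_bdmc_def)
  have "set_pmf (q_ch (minus_ch U)) \<subseteq> case_prod MinusOut ` (?A \<times> ?A)"
    unfolding set_pmf_q_ch[of "minus_ch U"]
    by (auto simp: minus_ch_def image_iff intro: set_pmf_subset_q_ch[THEN subsetD])
  then have "measure_pmf.expectation (q_ch (minus_ch U)) (\<lambda>z. g \<bar>Delta (minus_ch U) z\<bar>)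
      = (\<Sum>(y1, y2)\<in>?A \<times> ?A. pmf (q_ch U) y1 * pmf (q_ch U) y2 * g \<bar>Delta U y1 * Delta U y2\<bar>)"
    using A by (subst expectation_pmf_reindex[of "?A \<times> ?A"])
      (auto simp: inj_on_def pmf_q_ch_minus_ch Delta_minus_ch intro!: sum.cong)
  also have "\<dots> = measure_pmf.expectation (q_ch U) (\<lambda>y1. measure_pmf.expectation (q_ch U)
        (\<lambda>y2. g \<bar>Delta U y1 * Delta U y2\<bar>))"
    using A by (simp add: expectation_pmf_double)
  finally show ?thesis .
qed

lemma expectation_q_ch_plus_ch:
  fixes g :: "real \<Rightarrow> real"
  assumes "is_bdmc U"
  shows "measure_pmf.expectation (q_ch (plus_ch U)) (\<lambda>z. g \<bar>Delta (plus_ch U) z\<bar>)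
    = measure_pmf.expectation (q_ch U) (\<lambda>y1. measure_pmf.expectation (q_ch U)
        (\<lambda>y2. plus_kernel g (Delta U y1) (Delta U y2)))"
proof -
  let ?A = "set_pmf (q_ch U)" and ?out = "\<lambda>((y1, y2), u). PlusOut y1 y2 u"
  have A: "finite ?A" using assms by (simp add: set_pmf_q_ch is_bdmc_def)
  have "set_pmf (q_ch (plus_ch U)) \<subseteq> ?out ` ((?A \<times> ?A) \<times> UNIV)"
    unfolding set_pmf_q_ch[of "plus_ch U"]
    by (auto simp: plus_ch_def image_iff intro: set_pmf_subset_q_ch[THEN subsetD])
  then have "measure_pmf.expectation (q_ch (plus_ch U)) (\<lambda>z. g \<bar>Delta (plus_ch U) z\<bar>)
      = (\<Sum>(y1, y2)\<in>?A \<times> ?A. \<Sum>u\<in>UNIV. pmf (q_ch (plus_ch U)) (PlusOut y1 y2 u)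
          * g \<bar>Delta (plus_ch U) (PlusOut y1 y2 u)\<bar>)"
    using A by (subst expectation_pmf_reindex[of "(?A \<times> ?A) \<times> UNIV"])
      (auto simp: inj_on_def sum.cartesian_product split_beta)
  also have "\<dots> = measure_pmf.expectation (q_ch U) (\<lambda>y1. measure_pmf.expectation (q_ch U)
        (\<lambda>y2. plus_kernel g (Delta U y1) (Delta U y2)))"
    using A by (simp add: expectation_pmf_double sum_plus_ch_outputs split_beta)
  finally show ?thesis .
qed

section \<open>Polarisation preserves the order\<close>

lemma absDelta_law_lift_ch: "absDelta_law (lift_ch W) = absDelta_law W"
proof -
  have "q_ch (lift_ch W) = map_pmf Base (q_ch W)"
    by (simp add: q_ch_def lift_ch_def map_bind_pmf)
  moreover have "Delta (lift_ch W) (Base y) = Delta W y" for y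
    by (simp add: Delta_def lift_ch_def pmf_map_inj' inj_def)
  ultimately show ?thesis by (simp add: absDelta_law_def map_pmf_comp)
qed

lemma expectation_absDelta_law:
  fixes f :: "real \<Rightarrow> real"
  shows "measure_pmf.expectation (absDelta_law U) f = measure_pmf.expectation (q_ch U) (\<lambda>y. f \<bar>Delta U y\<bar>)"
  unfolding absDelta_law_def by (rule integral_map_pmf)

lemma finite_set_pmf_absDelta_law: "is_bdmc U \<Longrightarrow> finite (set_pmf (absDelta_law U))"
  by (simp add: absDelta_law_def set_pmf_q_ch is_bdmc_def)

lemma set_pmf_absDelta_law: "set_pmf (absDelta_law U) \<subseteq> {0..1}"
  using abs_Delta_le_1[of U] by (auto simp: absDelta_law_def)

lemma expectation_absDelta_law_plus_ch:
  fixes g :: "real \<Rightarrow> real"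
  assumes "is_bdmc U"
  shows "measure_pmf.expectation (absDelta_law (plus_ch U)) g
    = measure_pmf.expectation (absDelta_law U) (\<lambda>a. measure_pmf.expectation (absDelta_law U) (plus_kernel g a))"
  using expectation_q_ch_plus_ch[OF assms, of g]
  by (simp add: expectation_absDelta_law plus_kernel_abs)

lemma expectation_absDelta_law_minus_ch:
  fixes g :: "real \<Rightarrow> real"
  assumes "is_bdmc U"
  shows "measure_pmf.expectation (absDelta_law (minus_ch U)) g
    = measure_pmf.expectation (absDelta_law U) (\<lambda>a. measure_pmf.expectation (absDelta_law U) (\<lambda>b. g \<bar>a * b\<bar>))"
  using expectation_q_ch_minus_ch[OF assms, of g]
  by (simp add: expectation_absDelta_law abs_mult)

lemma icx01_le_pol_step:
  assumes U: "is_bdmc U" and U': "is_bdmc U'"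
    and le: "icx01_le (absDelta_law U) (absDelta_law U')"
  shows "icx01_le (absDelta_law (pol_step U c)) (absDelta_law (pol_step U' c))"
  unfolding icx01_le_def
proof (intro allI impI)
  fix g assume g: "mono_convex01 g"
  note double = icx01_le_double_expectation[OF finite_set_pmf_absDelta_law[OF U] set_pmf_absDelta_law
      finite_set_pmf_absDelta_law[OF U'] set_pmf_absDelta_law le]
  show "measure_pmf.expectation (absDelta_law (pol_step U c)) g
      \<le> measure_pmf.expectation (absDelta_law (pol_step U' c)) g"
  proof (cases c)
    case SPlus
    have "mono_convex01 (\<lambda>a. plus_kernel g a b)" if "b \<in> {0..1}" for b
      using g that by (intro mono_convex01_plus_kernel) auto
    then have "measure_pmf.expectation (absDelta_law (plus_ch U)) g
        \<le> measure_pmf.expectation (absDelta_law (plus_ch U')) g"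
      unfolding expectation_absDelta_law_plus_ch[OF U] expectation_absDelta_law_plus_ch[OF U']
      by (rule double) (simp_all add: plus_kernel_commute)
    then show ?thesis by (simp add: SPlus pol_step_def)
  next
    case SMinus
    have "mono_convex01 (\<lambda>a. g \<bar>a * b\<bar>)" if "b \<in> {0..1}" for b
      using g that by (intro mono_convex01_abs_mult) auto
    then have "measure_pmf.expectation (absDelta_law (minus_ch U)) g
        \<le> measure_pmf.expectation (absDelta_law (minus_ch U')) g"
      unfolding expectation_absDelta_law_minus_ch[OF U] expectation_absDelta_law_minus_ch[OF U']
      by (rule double) (simp_all add: mult.commute)
    then show ?thesis by (simp add: SMinus pol_step_def)
  qed
qed

lemma icx01_le_polarize:
  assumes W: "is_bdmc W" and V: "is_bdmc V" and le: "icx01_le (absDelta_law V) (absDelta_law W)"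
  shows "icx01_le (absDelta_law (polarize V s)) (absDelta_law (polarize W s))"
proof (induction s rule: rev_induct)
  case Nil
  then show ?case using le by (simp add: polarize_def absDelta_law_lift_ch)
next
  case (snoc c s)
  then show ?case
    using icx01_le_pol_step[OF is_bdmc_polarize[OF V] is_bdmc_polarize[OF W]]
    by (simp add: polarize_def)
qed

theorem corollary1:
  fixes W :: "'y bdmc" and V :: "'z bdmc" and \<phi> :: "real \<Rightarrow> real" and \<epsilon> :: real and n :: nat
  assumes "is_bdmc W" and "is_bdmc V"
    and "icx_le (absDelta_law V) (absDelta_law W)"
    and "0 < \<epsilon>" and "\<epsilon> < 1"
    and "convex_on {0..1} \<phi>" and "mono_on {0..1} \<phi>" and "\<phi> 0 = 0" and "\<phi> 1 = 1"
    and "n \<ge> 1"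
  shows "info_set n \<phi> \<epsilon> V \<subseteq> info_set n \<phi> \<epsilon> W"
proof
  fix s assume s: "s \<in> info_set n \<phi> \<epsilon> V"
  have "icx01_le (absDelta_law V) (absDelta_law W)"
    by (intro icx_le_imp_icx01_le finite_set_pmf_absDelta_law set_pmf_absDelta_law assms(1-3))
  then have "icx01_le (absDelta_law (polarize V s)) (absDelta_law (polarize W s))"
    using assms(1,2) by (intro icx01_le_polarize)
  moreover have "mono_convex01 \<phi>" using assms(6,7) by (simp add: mono_convex01_def)
  ultimately have "measure_pmf.expectation (absDelta_law (polarize V s)) \<phi>
      \<le> measure_pmf.expectation (absDelta_law (polarize W s)) \<phi>"
    by (simp add: icx01_le_def)
  with s show "s \<in> info_set n \<phi> \<epsilon> W"
    unfolding info_set_def expectation_absDelta_law by simp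
qed

end
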